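(* Let $d\geq 1$ and $s\geq 2$ be integers, let $A:=\{\sqrt{2i}\colon i\in\{1,\dots,s\}\}$, and let $\mathcal{W}:=\{(w_1,\dots,w_d)^T\in\mathbb{R}^d\colon w_i\in A \text{ for all } i\in\{1,\dots,d\}\}$. For $w=(w_1,\dots,w_d)^T\in\mathcal{W}$ let $\mathcal{V}_w$ be the set of real solution vectors $v=(v_1,\dots,v_d)^T\in\mathbb{R}^d$ of the system of $d$ equations \[ \sum_{i=1}^d\left(\frac{w_1^2-w_i^2}{2}+v_1\right)^2=w_1^2+2v_1-1,\qquad v_j=\frac{w_1^2-w_j^2}{2}+v_1\quad (j\in\{2,\dots,d\}). \] Let $\Gamma$ be the graph whose vertex set is $\bigcup_{w\in\mathcal{W}}\mathcal{V}_w$, in which two distinct vertices $x,y$ are adjacent if and only if $\mu(x,y)\in A$, and let $\omega(\Gamma)$ be the size of a maximum clique of $\Gamma$. Then for some subset $A'\subseteq A$ there exists a set $\mathcal{X}\subset\mathbb{R}^d$ with $d+\omega(\Gamma)$ elements which is an $|A'|$-distance set with $A(\mathcal{X})=A'$.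
   Context: $\mu(x,y)$ denotes the Euclidean distance in $\mathbb{R}^d$. For a finite set $\mathcal{X}$ of distinct vectors in $\mathbb{R}^d$, $A(\mathcal{X})$ denotes the set of distances $\mu(x,y)$ between distinct elements $x,y\in\mathcal{X}$; $\mathcal{X}$ is called an $s$-distance set if $|A(\mathcal{X})|=s$. A clique of a graph is a set of pairwise adjacent vertices. *)

theory Defs
  imports Main Complex_Main
begin

text \<open>Points of R^d are represented as functions nat => real supported on {1..d}.\<close>

definition Rd :: "nat \<Rightarrow> (nat \<Rightarrow> real) set" where
  "Rd d = {x. \<forall>i. i \<notin> {1..d} \<longrightarrow> x i = 0}"

definition mu :: "nat \<Rightarrow> (nat \<Rightarrow> real) \<Rightarrow> (nat \<Rightarrow> real) \<Rightarrow> real" where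
  "mu d x y = sqrt (\<Sum>i=1..d. (x i - y i)^2)"

definition distset :: "nat \<Rightarrow> (nat \<Rightarrow> real) set \<Rightarrow> real set" where
  "distset d X = {mu d x y | x y. x \<in> X \<and> y \<in> X \<and> x \<noteq> y}"

definition is_s_distance_set :: "nat \<Rightarrow> (nat \<Rightarrow> real) set \<Rightarrow> nat \<Rightarrow> bool" where
  "is_s_distance_set d X s \<longleftrightarrow> finite X \<and> card (distset d X) = s"

definition Aset :: "nat \<Rightarrow> real set" where
  "Aset s = {sqrt (2 * real i) | i. i \<in> {1..s}}"

definition Wset :: "nat \<Rightarrow> nat \<Rightarrow> (nat \<Rightarrow> real) set" where
  "Wset d s = {w \<in> Rd d. \<forall>i\<in>{1..d}. w i \<in> Aset s}"

definition Vset :: "nat \<Rightarrow> (nat \<Rightarrow> real) \<Rightarrow> (nat \<Rightarrow> real) set" where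
  "Vset d w = {v \<in> Rd d.
      (\<Sum>i=1..d. ((w 1 ^ 2 - w i ^ 2) / 2 + v 1) ^ 2) = w 1 ^ 2 + 2 * v 1 - 1 \<and>
      (\<forall>j\<in>{2..d}. v j = (w 1 ^ 2 - w j ^ 2) / 2 + v 1)}"

definition GammaV :: "nat \<Rightarrow> nat \<Rightarrow> (nat \<Rightarrow> real) set" where
  "GammaV d s = (\<Union>w\<in>Wset d s. Vset d w)"

definition Gamma_adj :: "nat \<Rightarrow> nat \<Rightarrow> (nat \<Rightarrow> real) \<Rightarrow> (nat \<Rightarrow> real) \<Rightarrow> bool" where
  "Gamma_adj d s x y \<longleftrightarrow> x \<in> GammaV d s \<and> y \<in> GammaV d s \<and> x \<noteq> y \<and> mu d x y \<in> Aset s"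

definition is_clique :: "nat \<Rightarrow> nat \<Rightarrow> (nat \<Rightarrow> real) set \<Rightarrow> bool" where
  "is_clique d s C \<longleftrightarrow> C \<subseteq> GammaV d s \<and> (\<forall>x\<in>C. \<forall>y\<in>C. x \<noteq> y \<longrightarrow> Gamma_adj d s x y)"

definition clique_number :: "nat \<Rightarrow> nat \<Rightarrow> nat" where
  "clique_number d s = Max {card C | C. finite C \<and> is_clique d s C}"

end

theory Submission
  imports Defs
begin

text \<open>
  Write \<open>e\<^sub>k\<close> for the standard unit vectors. They are pairwise at distance \<open>\<surd>2 \<in> A\<close>.
  The equations defining \<open>\<V>\<^sub>w\<close> say precisely that \<open>|v|\<^sup>2 = w\<^sub>1\<^sup>2 + 2v\<^sub>1 - 1\<close> and
  \<open>2v\<^sub>k = w\<^sub>1\<^sup>2 - w\<^sub>k\<^sup>2 + 2v\<^sub>1\<close>, i.e. \<open>|v - e\<^sub>k|\<^sup>2 = |v|\<^sup>2 - 2v\<^sub>k + 1 = w\<^sub>k\<^sup>2\<close>: every vertex of \<open>\<Gamma>\<close>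
  lies at a distance in \<open>A\<close> from every \<open>e\<^sub>k\<close>, and in particular is not a unit vector.
  Adjoining the \<open>d\<close> unit vectors to a maximum clique therefore gives \<open>d + \<omega>(\<Gamma>)\<close> points
  all of whose mutual distances lie in \<open>A\<close>; take \<open>A'\<close> to be the set of these distances.
  The vertex set is finite because each \<open>\<V>\<^sub>w\<close> is parametrised by the roots \<open>v\<^sub>1\<close> of a
  nondegenerate quadratic equation, so the clique number is attained.
\<close>

lemma finite_sum_power2_shift_eq_affine:
  fixes c :: "'a \<Rightarrow> real"
  assumes "finite I" and "I \<noteq> {}"
  shows "finite {x. (\<Sum>i\<in>I. (c i + x)\<^sup>2) = \<alpha> + \<beta> * x}"
proof (cases "{x. (\<Sum>i\<in>I. (c i + x)\<^sup>2) = \<alpha> + \<beta> * x} = {}")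
  case False
  then obtain r where r: "(\<Sum>i\<in>I. (c i + r)\<^sup>2) = \<alpha> + \<beta> * r" by blast
  have card_pos: "real (card I) > 0" using assms by (simp add: card_gt_0_iff)
  have "{x. (\<Sum>i\<in>I. (c i + x)\<^sup>2) = \<alpha> + \<beta> * x} \<subseteq> {r, (\<beta> - 2 * sum c I) / real (card I) - r}"
  proof
    fix y assume "y \<in> {x. (\<Sum>i\<in>I. (c i + x)\<^sup>2) = \<alpha> + \<beta> * x}"
    then have y: "(\<Sum>i\<in>I. (c i + y)\<^sup>2) = \<alpha> + \<beta> * y" by simp
    have "(\<Sum>i\<in>I. (c i + y)\<^sup>2) - (\<Sum>i\<in>I. (c i + r)\<^sup>2) = (\<Sum>i\<in>I. (y - r) * (2 * c i + (y + r)))"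
      by (simp add: sum_subtractf[symmetric] power2_eq_square algebra_simps)
    also have "\<dots> = (y - r) * (2 * sum c I + real (card I) * (y + r))"
      by (simp add: sum_distrib_left[symmetric] sum.distrib sum_distrib_left[of 2, symmetric])
    finally have "(y - r) * (2 * sum c I + real (card I) * (y + r) - \<beta>) = 0"
      using y r by (simp add: algebra_simps)
    then have "y = r \<or> real (card I) * (y + r) = \<beta> - 2 * sum c I" by auto
    then show "y \<in> {r, (\<beta> - 2 * sum c I) / real (card I) - r}"
      using card_pos by (auto simp: field_simps)
  qed
  then show ?thesis by (rule finite_subset) simp
qed simp

lemma finite_Aset: "finite (Aset s)"
proof -
  have "Aset s = (\<lambda>i. sqrt (2 * real i)) ` {1..s}" unfolding Aset_def by auto
  then show ?thesis by simp
qed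

lemma Aset_pos: "a \<in> Aset s \<Longrightarrow> a > 0"
  unfolding Aset_def by auto

lemma sqrt_2_in_Aset: "s \<ge> 1 \<Longrightarrow> sqrt 2 \<in> Aset s"
  unfolding Aset_def by force

lemma finite_Wset: "finite (Wset d s)"
proof -
  have "Wset d s \<subseteq> {f. \<forall>x. (x \<in> {1..d} \<longrightarrow> f x \<in> Aset s) \<and> (x \<notin> {1..d} \<longrightarrow> f x = 0)}"
    unfolding Wset_def Rd_def by auto
  then show ?thesis
    by (rule finite_subset) (intro finite_set_of_finite_funs finite_Aset finite_atLeastAtMost)
qed

lemma Vset_coord:
  assumes "v \<in> Vset d w" and "i \<in> {1..d}"
  shows "v i = (w 1 ^ 2 - w i ^ 2) / 2 + v 1"
  using assms unfolding Vset_def by (cases "i = 1") auto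

lemma Vset_sum_power2:
  assumes "v \<in> Vset d w"
  shows "(\<Sum>i=1..d. (v i)\<^sup>2) = w 1 ^ 2 + 2 * v 1 - 1"
proof -
  have "(\<Sum>i=1..d. (v i)\<^sup>2) = (\<Sum>i=1..d. ((w 1 ^ 2 - w i ^ 2) / 2 + v 1)\<^sup>2)"
    using Vset_coord[OF assms] by (intro sum.cong refl) metis
  with assms show ?thesis unfolding Vset_def by simp
qed

lemma finite_Vset:
  assumes "d \<ge> 1"
  shows "finite (Vset d w)"
proof -
  define c where "c i = (w 1 ^ 2 - w i ^ 2) / 2" for i
  define R where "R = {x. (\<Sum>i\<in>{1..d}. (c i + x)\<^sup>2) = (w 1 ^ 2 - 1) + 2 * x}"
  have "finite R"
    unfolding R_def using assms by (intro finite_sum_power2_shift_eq_affine) auto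
  moreover have "Vset d w \<subseteq> (\<lambda>x i. if i \<in> {1..d} then c i + x else 0) ` R"
  proof
    fix v assume v: "v \<in> Vset d w"
    have "v = (\<lambda>i. if i \<in> {1..d} then c i + v 1 else 0)"
    proof
      fix i show "v i = (if i \<in> {1..d} then c i + v 1 else 0)"
        using v Vset_coord[OF v, of i] unfolding Vset_def Rd_def c_def by auto
    qed
    moreover have "v 1 \<in> R"
      using v unfolding Vset_def R_def c_def by simp
    ultimately show "v \<in> (\<lambda>x i. if i \<in> {1..d} then c i + x else 0) ` R" by blast
  qed
  ultimately show ?thesis using finite_subset by blast
qed

lemma finite_GammaV: "d \<ge> 1 \<Longrightarrow> finite (GammaV d s)"
  unfolding GammaV_def by (intro finite_UN_I finite_Wset finite_Vset)

lemma GammaV_subset_Rd: "GammaV d s \<subseteq> Rd d"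
  unfolding GammaV_def Vset_def by auto

lemma clique_number_attained:
  assumes "finite (GammaV d s)"
  obtains C where "finite C" "is_clique d s C" "card C = clique_number d s"
proof -
  let ?S = "{card C | C. finite C \<and> is_clique d s C}"
  have "?S \<subseteq> card ` Pow (GammaV d s)" unfolding is_clique_def by auto
  then have "finite ?S" using assms finite_subset by blast
  moreover have "is_clique d s {}" unfolding is_clique_def by simp
  then have "card {} \<in> ?S" by (intro CollectI exI[of _ "{}"]) simp
  ultimately have "clique_number d s \<in> ?S" unfolding clique_number_def by (intro Max_in) auto
  then show ?thesis using that by auto
qed

definition unit_vec :: "nat \<Rightarrow> nat \<Rightarrow> real" where
  "unit_vec k = (\<lambda>i. if i = k then 1 else 0)"

lemma unit_vec_in_Rd: "k \<in> {1..d} \<Longrightarrow> unit_vec k \<in> Rd d"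
  unfolding unit_vec_def Rd_def by auto

lemma inj_unit_vec: "inj unit_vec"
  by (rule injI) (metis unit_vec_def zero_neq_one)

lemma mu_sym: "mu d x y = mu d y x"
  unfolding mu_def by (simp add: power2_commute)

lemma sum_power2_diff_unit_vec:
  assumes "k \<in> {1..d}"
  shows "(\<Sum>i=1..d. (x i - unit_vec k i)\<^sup>2) = (\<Sum>i=1..d. (x i)\<^sup>2) - 2 * x k + 1"
proof -
  have "(\<Sum>i=1..d. (x i - unit_vec k i)\<^sup>2) = (\<Sum>i=1..d. (x i)\<^sup>2 + (if i = k then 1 - 2 * x i else 0))"
    by (intro sum.cong) (simp_all add: unit_vec_def power2_diff)
  with assms show ?thesis by (simp add: sum.distrib)
qed

lemma mu_unit_vec_unit_vec:
  assumes "j \<in> {1..d}" "k \<in> {1..d}" "j \<noteq> k"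
  shows "mu d (unit_vec j) (unit_vec k) = sqrt 2"
proof -
  have "(\<Sum>i=1..d. (unit_vec j i)\<^sup>2) = (\<Sum>i=1..d. if i = j then 1 else 0)"
    by (intro sum.cong) (auto simp: unit_vec_def)
  also have "\<dots> = 1" using assms(1) by simp
  finally have "(\<Sum>i=1..d. (unit_vec j i)\<^sup>2) = 1" .
  moreover have "unit_vec j k = 0" using assms(3) by (simp add: unit_vec_def)
  ultimately show ?thesis
    unfolding mu_def sum_power2_diff_unit_vec[OF assms(2)] by simp
qed

lemma mu_Vset_unit_vec:
  assumes "v \<in> Vset d w" and "k \<in> {1..d}"
  shows "mu d v (unit_vec k) = \<bar>w k\<bar>"
proof -
  have "(\<Sum>i=1..d. (v i - unit_vec k i)\<^sup>2) = (\<Sum>i=1..d. (v i)\<^sup>2) - 2 * v k + 1"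
    by (rule sum_power2_diff_unit_vec[OF assms(2)])
  also have "\<dots> = (w k)\<^sup>2"
    using Vset_sum_power2[OF assms(1)] Vset_coord[OF assms] by (simp add: field_simps)
  finally have "(\<Sum>i=1..d. (v i - unit_vec k i)\<^sup>2) = (w k)\<^sup>2" .
  then show ?thesis unfolding mu_def by simp
qed

lemma mu_GammaV_unit_vec_in_Aset:
  assumes "v \<in> GammaV d s" and "k \<in> {1..d}"
  shows "mu d v (unit_vec k) \<in> Aset s"
proof -
  obtain w where w: "w \<in> Wset d s" "v \<in> Vset d w" using assms(1) unfolding GammaV_def by blast
  then have "w k \<in> Aset s" using assms(2) unfolding Wset_def by blast
  with Aset_pos show ?thesis using mu_Vset_unit_vec[OF w(2) assms(2)] by force
qed

lemma unit_vec_notin_GammaV: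
  assumes "k \<in> {1..d}"
  shows "unit_vec k \<notin> GammaV d s"
  using mu_GammaV_unit_vec_in_Aset[OF _ assms] Aset_pos by (fastforce simp: mu_def)

lemma distset_unit_vecs_Un_clique:
  assumes "is_clique d s C" and "s \<ge> 1"
  shows "distset d (unit_vec ` {1..d} \<union> C) \<subseteq> Aset s"
proof
  fix a assume "a \<in> distset d (unit_vec ` {1..d} \<union> C)"
  then obtain x y where x: "x \<in> unit_vec ` {1..d} \<union> C" and y: "y \<in> unit_vec ` {1..d} \<union> C"
    and "x \<noteq> y" and a: "a = mu d x y"
    unfolding distset_def by blast
  have CG: "C \<subseteq> GammaV d s" using assms(1) unfolding is_clique_def by blast
  show "a \<in> Aset s"
  proof (cases "x \<in> C"; cases "y \<in> C")
    assume "x \<in> C" "y \<in> C"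
    then show ?thesis using assms(1) \<open>x \<noteq> y\<close> a unfolding is_clique_def Gamma_adj_def by blast
  next
    assume "x \<in> C" "y \<notin> C"
    then obtain k where "k \<in> {1..d}" "y = unit_vec k" using y by blast
    then show ?thesis using mu_GammaV_unit_vec_in_Aset \<open>x \<in> C\<close> CG a by blast
  next
    assume "x \<notin> C" "y \<in> C"
    then obtain k where "k \<in> {1..d}" "x = unit_vec k" using x by blast
    then show ?thesis
      using mu_GammaV_unit_vec_in_Aset[of y d s k] \<open>y \<in> C\<close> CG a mu_sym[of d x y] by auto
  next
    assume "x \<notin> C" "y \<notin> C"
    then obtain j k where "j \<in> {1..d}" "x = unit_vec j" "k \<in> {1..d}" "y = unit_vec k"
      using x y by blast
    then show ?thesis
      using mu_unit_vec_unit_vec sqrt_2_in_Aset[OF assms(2)] \<open>x \<noteq> y\<close> a by metis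
  qed
qed

theorem theorem2p1:
  fixes d s :: nat
  assumes "d \<ge> 1" and "s \<ge> 2"
  shows "\<exists>A'. A' \<subseteq> Aset s \<and>
           (\<exists>X. X \<subseteq> Rd d \<and> finite X \<and> card X = d + clique_number d s \<and>
                is_s_distance_set d X (card A') \<and> distset d X = A')"
proof -
  obtain C where C: "finite C" "is_clique d s C" "card C = clique_number d s"
    using clique_number_attained finite_GammaV[OF assms(1)] by blast
  have CG: "C \<subseteq> GammaV d s" using C(2) unfolding is_clique_def by blast
  define X where "X = unit_vec ` {1..d} \<union> C"
  have "unit_vec ` {1..d} \<inter> C = {}" using CG unit_vec_notin_GammaV by blast
  then have "card X = d + clique_number d s"
    unfolding X_def using C by (simp add: card_Un_disjoint card_image inj_on_subset[OF inj_unit_vec])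
  moreover have "X \<subseteq> Rd d" unfolding X_def using CG GammaV_subset_Rd unit_vec_in_Rd by blast
  moreover have "distset d X \<subseteq> Aset s"
    unfolding X_def using C(2) assms(2) by (intro distset_unit_vecs_Un_clique) auto
  moreover have "finite X" unfolding X_def using C(1) by simp
  ultimately show ?thesis
    unfolding is_s_distance_set_def by (intro exI[of _ "distset d X"] exI[of _ X] conjI) auto
qed

end
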